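(* Let $3\leq m\leq n$, $\ell=m-1$. Then $\mathfrak{A}\cap\mathfrak{S}=\varnothing$.
   Context: For $Y=(Y_1;\ldots;Y_\ell)\in\mathbb{R}^{n\times n\times\ell}$ and $\mathbf{a}=(a_1,\ldots,a_\ell,a_m)^\top\in\mathbb{R}^m$, $M(\mathbf{a},Y)=\sum_{k=1}^\ell a_kY_k-a_mE_n$. $\mathfrak{A}=\{Y\mid \det M(\mathbf{a},Y)>0\text{ for all }\mathbf{a}\neq\mathbf{0}\}$, equivalently the set of $Y$ such that $(Y_1;\ldots;Y_\ell;E_n)$ is absolutely nonsingular (i.e. $\det(\sum_k x_kT_k)=0$ only for $x=\mathbf 0$). $V(Y)=\{\mathbf{a}\in\mathbb{R}^n\mid \sum_{k=1}^\ell x_kY_k\mathbf{a}=x_m\mathbf{a}\text{ for some }(x_1,\ldots,x_m)^\top\neq\mathbf{0}\}$, $\hat V(Y)$ its linear span, and $\mathfrak{S}=\{Y\mid\dim\hat V(Y)=n\}$. *)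

theory Defs
  imports "HOL-Analysis.Analysis"
begin

text \<open>Conventions: n is the dimension type 'n (CARD('n) = n).
  A tuple Y = (Y_1;...;Y_l) is a function Y :: nat => real^'n^'n, where Y_k is
  represented by Y (k-1), k = 1..l (values at indices >= l are irrelevant).
  A vector a = (a_1,...,a_l,a_m) in R^m (m = l+1) is a function a :: nat => real,
  with a_k = a (k-1) for k = 1..l and a_m = a l.\<close>

definition Mmat :: "nat \<Rightarrow> (nat \<Rightarrow> real) \<Rightarrow> (nat \<Rightarrow> real^'n^'n) \<Rightarrow> real^'n^'n" where
  "Mmat l a Y = (\<Sum>k<l. a k *\<^sub>R Y k) - a l *\<^sub>R mat 1"

definition nonzero_coeffs :: "nat \<Rightarrow> (nat \<Rightarrow> real) \<Rightarrow> bool" where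
  "nonzero_coeffs l a \<longleftrightarrow> (\<exists>k\<le>l. a k \<noteq> 0)"

definition setA :: "nat \<Rightarrow> (nat \<Rightarrow> real^'n^'n) set" where
  "setA l = {Y. \<forall>a. nonzero_coeffs l a \<longrightarrow> det (Mmat l a Y) > 0}"

definition Vset :: "nat \<Rightarrow> (nat \<Rightarrow> real^'n^'n) \<Rightarrow> (real^'n) set" where
  "Vset l Y = {v. \<exists>x. nonzero_coeffs l x \<and> (\<Sum>k<l. x k *\<^sub>R (Y k *v v)) = x l *\<^sub>R v}"

definition setS :: "nat \<Rightarrow> (nat \<Rightarrow> real^'n^'n) set" where
  "setS l = {Y. dim (span (Vset l Y)) = CARD('n)}"

end

theory Submission
  imports Defs
begin

text \<open>
  For Y in setA every pencil matrix M(a,Y) with a nonzero coefficient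
  vector a has positive, hence nonzero, determinant, so it is invertible and its
  kernel is trivial.  A vector v lies in V(Y) exactly when M(x,Y) v = 0 for some
  nonzero coefficient vector x; therefore V(Y) is contained in {0}, its
  span has dimension 0, and this cannot equal n = CARD('n) >= 1.  So setA and setS
  are disjoint for every l.
\<close>

lemma sum_matrix_vector_mult:
  fixes f :: "'i \<Rightarrow> 'a::comm_semiring_1^'n^'m"
  assumes "finite S"
  shows "(\<Sum>k\<in>S. f k) *v v = (\<Sum>k\<in>S. f k *v v)"
  using assms
  by (induction S rule: finite_induct) (simp_all add: matrix_vector_mult_add_rdistrib)

text \<open>The equation defining V(Y) says precisely that v is in the kernel of M(x,Y).\<close>
lemma Mmat_mult_vector:
  "Mmat l x Y *v v = (\<Sum>k<l. x k *\<^sub>R (Y k *v v)) - x l *\<^sub>R v"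
  unfolding Mmat_def
  by (simp add: matrix_vector_mult_diff_rdistrib sum_matrix_vector_mult
      flip: scaleR_matrix_vector_assoc)

lemma det_nonzero_kernel_trivial:
  fixes A :: "real^'n^'n"
  assumes "det A \<noteq> 0" and "A *v v = 0"
  shows "v = 0"
proof -
  have "invertible A" using assms(1) by (simp add: invertible_det_nz)
  then have "\<exists>B. B ** A = mat 1" by (auto simp: invertible_def)
  then show ?thesis using assms(2) by (simp add: matrix_left_invertible_ker)
qed

lemma Vset_trivial_if_setA:
  assumes "Y \<in> setA l"
  shows "Vset l Y \<subseteq> {0}"
proof
  fix v assume "v \<in> Vset l Y"
  then obtain x where nz: "nonzero_coeffs l x"
    and eigen: "(\<Sum>k<l. x k *\<^sub>R (Y k *v v)) = x l *\<^sub>R v"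
    unfolding Vset_def by blast
  have "det (Mmat l x Y) \<noteq> 0" using assms nz unfolding setA_def by force
  moreover have "Mmat l x Y *v v = 0" using eigen by (simp add: Mmat_mult_vector)
  ultimately show "v \<in> {0}" using det_nonzero_kernel_trivial by blast
qed

lemma setA_setS_disjoint:
  "setA l \<inter> setS l = ({} :: (nat \<Rightarrow> real^'n^'n) set)"
proof -
  have "Y \<notin> setS l" if "Y \<in> setA l" for Y :: "nat \<Rightarrow> real^'n^'n"
  proof -
    have "dim (span (Vset l Y)) = 0"
      using Vset_trivial_if_setA[OF that] by simp
    then show ?thesis unfolding setS_def by (simp del: dim_span dim_eq_0)
  qed
  then show ?thesis by blast
qed

theorem mainTheorem9:
  fixes m l :: nat
  assumes "3 \<le> m" and "m \<le> CARD('n::finite)" and "l = m - 1"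
  shows "setA l \<inter> setS l = ({} :: (nat \<Rightarrow> real^'n^'n) set)"
  by (rule setA_setS_disjoint)

end
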